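(* Consider the uncertain control-affine system $$\dot x = f(x) + B(x)\left[u - \varphi(x)^\top \theta\right],\qquad x\in\mathbb{R}^n,\ u\in\mathbb{R}^m,$$ with unknown constant parameter $\theta\in\mathbb{R}^p$, smooth $f:\mathbb{R}^n\to\mathbb{R}^n$, smooth $B:\mathbb{R}^n\to\mathbb{R}^{n\times m}$ with columns $b_1,\dots,b_m$, and smooth $\varphi:\mathbb{R}^n\to\mathbb{R}^{p\times m}$ with columns $\varphi_1,\dots,\varphi_m$ (so the uncertainty $\Delta(x)^\top\theta=B(x)\varphi(x)^\top\theta$ lies in the span of $B(x)$, i.e. satisfies the matching condition). Suppose a uniformly bounded Riemannian metric $M(x)$ satisfies the stronger CCM conditions (defined in the context) for the nominal system $\dot x = f(x)+B(x)u$ with rate $\lambda>0$. Then the same metric $M(x)$ satisfies the stronger CCM conditions, with the same rate $\lambda$, for the true system, i.e. for the system $\dot x = f_\theta(x) + B(x)u$ with drift $f_\theta(x) := f(x) - B(x)\varphi(x)^\top\theta$ (for the value of $\theta$).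
   Context: A Riemannian metric $M(x)$ is a smooth, symmetric, positive definite matrix function on $\mathbb{R}^n$; uniformly bounded means $\alpha_1 I\preceq M(x)\preceq \alpha_2 I$ for constants $0<\alpha_1\le\alpha_2$. For a vector field $v$, $\partial_v M := \sum_i \frac{\partial M}{\partial x_i} v_i$. For a control-affine system $\dot x = g(x) + B(x)u$ with columns $b_i$ of $B$, the metric $M$ satisfies the stronger CCM (control contraction metric) conditions with rate $\lambda>0$ if, for all $x$ and all $\delta_x\neq 0$ with $\delta_x^\top M(x)B(x)=0$, $$\delta_x^\top\left(\frac{\partial g}{\partial x}^\top M + M\frac{\partial g}{\partial x} + \dot M + 2\lambda M\right)\delta_x\le 0,\qquad \dot M := \partial_g M,$$ and, for each $i=1,\dots,m$, $\partial_{b_i}M + \frac{\partial b_i}{\partial x}^\top M + M\frac{\partial b_i}{\partial x} = 0$ (each $b_i$ is a Killing vector field for $M$). *)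

theory Defs
  imports "HOL-Analysis.Analysis"
begin

(* Directional derivative of a (Frechet differentiable) map g along v:
   (dirderiv g v) x = Dg(x) v.  For matrix-valued M this is
   \<partial>_v M (x) = sum_i dM/dx_i (x) v_i. *)
definition dirderiv :: "('a::real_normed_vector \<Rightarrow> 'b::real_normed_vector) \<Rightarrow> 'a \<Rightarrow> 'a \<Rightarrow> 'b" where
  "dirderiv g v = (\<lambda>x. frechet_derivative g (at x) v)"

primrec iter_dirderiv :: "'a list \<Rightarrow> ('a::real_normed_vector \<Rightarrow> 'b::real_normed_vector) \<Rightarrow> 'a \<Rightarrow> 'b" where
  "iter_dirderiv [] g = g"
| "iter_dirderiv (v # vs) g = iter_dirderiv vs (dirderiv g v)"

definition smooth :: "('a::real_normed_vector \<Rightarrow> 'b::real_normed_vector) \<Rightarrow> bool" where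
  "smooth g \<longleftrightarrow> (\<forall>vs x. iter_dirderiv vs g differentiable (at x))"

definition jac :: "(real^'n \<Rightarrow> real^'k) \<Rightarrow> real^'n \<Rightarrow> real^'n^'k" where
  "jac g x = matrix (frechet_derivative g (at x))"

definition unif_bounded_metric :: "(real^'n \<Rightarrow> real^'n^'n) \<Rightarrow> bool" where
  "unif_bounded_metric M \<longleftrightarrow> smooth M \<and> (\<forall>x. transpose (M x) = M x) \<and>
     (\<exists>a1 a2. 0 < a1 \<and> a1 \<le> a2 \<and>
        (\<forall>x v. a1 * (v \<bullet> v) \<le> v \<bullet> (M x *v v) \<and> v \<bullet> (M x *v v) \<le> a2 * (v \<bullet> v)))"

definition strong_ccm :: "(real^'n \<Rightarrow> real^'n^'n) \<Rightarrow> (real^'n \<Rightarrow> real^'n) \<Rightarrow> (real^'n \<Rightarrow> real^'m^'n) \<Rightarrow> real \<Rightarrow> bool" where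
  "strong_ccm M g B lam \<longleftrightarrow>
     (\<forall>x \<delta>. \<delta> \<noteq> 0 \<and> (\<delta> v* M x) v* B x = 0 \<longrightarrow>
        \<delta> \<bullet> ((transpose (jac g x) ** M x + M x ** jac g x + dirderiv M (g x) x
               + (2 * lam) *\<^sub>R M x) *v \<delta>) \<le> 0) \<and>
     (\<forall>i x. dirderiv M (column i (B x)) x
             + transpose (jac (\<lambda>y. column i (B y)) x) ** M x
             + M x ** jac (\<lambda>y. column i (B y)) x = 0)"

end

theory Submission imports Defs begin

text \<open>The Lie derivative \<open>L\<^sub>g M = Dg\<^sup>T M + M Dg + \<partial>\<^sub>g M\<close> of the metric enters both CCM
  conditions, and its quadratic form \<open>2 (M \<delta>) \<bullet> Dg \<delta> + \<delta> \<bullet> (\<partial>\<^sub>g M) \<delta>\<close> is linear in \<open>g\<close>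
  and depends only on \<open>g x\<close> and \<open>Dg x\<close>. For the matched uncertainty \<open>h = B c\<close> with
  \<open>c = \<phi>\<^sup>T \<theta>\<close>, the product rule splits the form of \<open>h\<close> into that of the Killing field
  \<open>y \<mapsto> B y c(x)\<close>, which is zero, plus \<open>2 (M \<delta>) \<bullet> (B Dc \<delta>)\<close>, which vanishes on the
  directions \<open>\<delta>\<^sup>T M B = 0\<close> where the first condition is imposed. So \<open>f\<close> and \<open>f - h\<close>
  have the same form there, while the Killing condition does not involve the drift.\<close>

definition metric_lie_deriv ::
  "(real^'n \<Rightarrow> real^'n^'n) \<Rightarrow> (real^'n \<Rightarrow> real^'n) \<Rightarrow> real^'n \<Rightarrow> real^'n^'n" where
  "metric_lie_deriv M g x = transpose (jac g x) ** M x + M x ** jac g x + dirderiv M (g x) x"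

lemma strong_ccm_iff_metric_lie_deriv:
  "strong_ccm M g B lam \<longleftrightarrow>
     (\<forall>x \<delta>. \<delta> \<noteq> 0 \<and> (\<delta> v* M x) v* B x = 0 \<longrightarrow>
        \<delta> \<bullet> ((metric_lie_deriv M g x + (2 * lam) *\<^sub>R M x) *v \<delta>) \<le> 0) \<and>
     (\<forall>i x. metric_lie_deriv M (\<lambda>y. column i (B y)) x = 0)"
  by (simp add: strong_ccm_def metric_lie_deriv_def ac_simps)

lemma smooth_imp_differentiable: "smooth g \<Longrightarrow> g differentiable (at x)"
  unfolding smooth_def by (metis iter_dirderiv.simps(1))

lemma jac_mult_vec:
  fixes g :: "real^'n \<Rightarrow> real^'k"
  assumes "(g has_derivative g') (at x)"
  shows "jac g x *v v = g' v"
proof -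
  have "frechet_derivative g (at x) = g'"
    using assms by (rule frechet_derivative_at[symmetric])
  moreover have "linear g'"
    using assms by (rule has_derivative_linear)
  ultimately show ?thesis
    unfolding jac_def by (metis matrix_vector_mul(2))
qed

lemma quadratic_form_symmetric_sandwich:
  fixes A J :: "real^'n^'n"
  assumes "transpose A = A"
  shows "\<delta> \<bullet> ((transpose J ** A + A ** J) *v \<delta>) = 2 * ((A *v \<delta>) \<bullet> (J *v \<delta>))"
proof -
  have "\<delta> \<bullet> ((transpose J ** A) *v \<delta>) = (A *v \<delta>) \<bullet> (J *v \<delta>)"
    by (metis dot_lmul_matrix inner_commute matrix_vector_mul_assoc transpose_matrix_vector)
  moreover have "\<delta> \<bullet> ((A ** J) *v \<delta>) = (A *v \<delta>) \<bullet> (J *v \<delta>)"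
    by (metis assms dot_lmul_matrix matrix_vector_mul_assoc transpose_matrix_vector)
  ultimately show ?thesis
    by (simp add: matrix_vector_mult_add_rdistrib inner_add_right)
qed

lemma quadratic_metric_lie_deriv:
  assumes "(g has_derivative g') (at x)" and "transpose (M x) = M x"
  shows "\<delta> \<bullet> (metric_lie_deriv M g x *v \<delta>)
    = 2 * ((M x *v \<delta>) \<bullet> g' \<delta>) + \<delta> \<bullet> (dirderiv M (g x) x *v \<delta>)"
  using quadratic_form_symmetric_sandwich[OF assms(2), of \<delta> "jac g x"]
  by (simp add: metric_lie_deriv_def jac_mult_vec[OF assms(1)]
      matrix_vector_mult_add_rdistrib inner_add_right)

lemma quadratic_metric_lie_deriv_diff:
  assumes "g differentiable (at x)" and "h differentiable (at x)"
    and "M differentiable (at x)" and "transpose (M x) = M x"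
  shows "\<delta> \<bullet> (metric_lie_deriv M (\<lambda>y. g y - h y) x *v \<delta>)
    = \<delta> \<bullet> (metric_lie_deriv M g x *v \<delta>) - \<delta> \<bullet> (metric_lie_deriv M h x *v \<delta>)"
proof -
  obtain g' h' where g': "(g has_derivative g') (at x)" and h': "(h has_derivative h') (at x)"
    using assms(1,2) unfolding differentiable_def by blast
  have dirderiv_diff: "dirderiv M (g x - h x) x = dirderiv M (g x) x - dirderiv M (h x) x"
    unfolding dirderiv_def using linear_frechet_derivative[OF assms(3)] by (rule linear_diff)
  show ?thesis
    using quadratic_metric_lie_deriv[where M=M and g="\<lambda>y. g y - h y",
        OF has_derivative_diff[OF g' h'] assms(4), of \<delta>]
      quadratic_metric_lie_deriv[where M=M, OF g' assms(4), of \<delta>]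
      quadratic_metric_lie_deriv[where M=M, OF h' assms(4), of \<delta>]
    by (simp add: dirderiv_diff matrix_vector_mult_diff_rdistrib inner_diff_right)
qed

lemma bounded_bilinear_matrix_vector_mult:
  "bounded_bilinear (\<lambda>(A::real^'m^'n) v. A *v v)"
  unfolding bilinear_conv_bounded_bilinear[symmetric] bilinear_def
  by (auto simp: linear_iff matrix_vector_mult_add_rdistrib matrix_vector_right_distrib
      matrix_vector_mult_scaleR simp flip: scaleR_matrix_vector_assoc)

lemma bounded_linear_column: "bounded_linear (\<lambda>A::real^'m^'n. column j A)"
  by (auto simp: linear_iff column_def vec_eq_iff linear_conv_bounded_linear[symmetric])

lemma quadratic_metric_lie_deriv_killing_combination:
  assumes "B differentiable (at x)" and "M differentiable (at x)"
    and "transpose (M x) = M x"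
    and killing: "\<And>j. metric_lie_deriv M (\<lambda>y. column j (B y)) x = 0"
  shows "\<delta> \<bullet> (metric_lie_deriv M (\<lambda>y. B y *v c) x *v \<delta>) = 0"
proof -
  define B' where "B' = frechet_derivative B (at x)"
  have B': "(B has_derivative B') (at x)"
    using assms(1) unfolding B'_def by (rule frechet_derivative_works[THEN iffD1])
  have column_zero: "2 * ((M x *v \<delta>) \<bullet> column j (B' \<delta>))
      + \<delta> \<bullet> (dirderiv M (column j (B x)) x *v \<delta>) = 0" for j
    using quadratic_metric_lie_deriv[where M=M,
        OF bounded_linear_column[of j, THEN bounded_linear.has_derivative, OF B'] assms(3), of \<delta>]
      killing[of j]
    by simp
  have combination: "A *v c = (\<Sum>j\<in>UNIV. c $ j *\<^sub>R column j A)" for A :: "real^_^_"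
    by (simp add: matrix_mult_sum scalar_mult_eq_scaleR)
  have "dirderiv M (B x *v c) x = (\<Sum>j\<in>UNIV. c $ j *\<^sub>R dirderiv M (column j (B x)) x)"
    unfolding combination dirderiv_def
    using linear_frechet_derivative[OF assms(2)] by (simp add: linear_sum linear_scale)
  then have "\<delta> \<bullet> (metric_lie_deriv M (\<lambda>y. B y *v c) x *v \<delta>)
      = (\<Sum>j\<in>UNIV. c $ j * (2 * ((M x *v \<delta>) \<bullet> column j (B' \<delta>))
          + \<delta> \<bullet> (dirderiv M (column j (B x)) x *v \<delta>)))"
    using quadratic_metric_lie_deriv[where M=M, OF bounded_bilinear_matrix_vector_mult[THEN
        bounded_bilinear.FDERIV, OF B' has_derivative_const] assms(3), of \<delta>]
    by (simp add: combination[of "B' \<delta>"]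
        bounded_bilinear.sum_left[OF bounded_bilinear_matrix_vector_mult]
        inner_sum_right sum_distrib_left sum.distrib algebra_simps flip: scaleR_matrix_vector_assoc)
  also have "\<dots> = 0"
    by (simp add: column_zero)
  finally show ?thesis .
qed

lemma quadratic_metric_lie_deriv_matched:
  assumes "B differentiable (at x)" and "c differentiable (at x)"
    and "M differentiable (at x)" and "transpose (M x) = M x"
    and "\<And>j. metric_lie_deriv M (\<lambda>y. column j (B y)) x = 0"
    and orthogonal: "(\<delta> v* M x) v* B x = 0"
  shows "\<delta> \<bullet> (metric_lie_deriv M (\<lambda>y. B y *v c y) x *v \<delta>) = 0"
proof -
  obtain B' c' where B': "(B has_derivative B') (at x)" and c': "(c has_derivative c') (at x)"
    using assms(1,2) unfolding differentiable_def by blast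
  have "(M x *v \<delta>) \<bullet> (B x *v c' \<delta>) = 0"
    using orthogonal by (metis assms(4) dot_lmul_matrix inner_zero_left transpose_matrix_vector)
  then have "\<delta> \<bullet> (metric_lie_deriv M (\<lambda>y. B y *v c y) x *v \<delta>)
      = \<delta> \<bullet> (metric_lie_deriv M (\<lambda>y. B y *v c x) x *v \<delta>)"
    using quadratic_metric_lie_deriv[where M=M, OF bounded_bilinear_matrix_vector_mult[THEN
        bounded_bilinear.FDERIV, OF B' c'] assms(4), of \<delta>]
      quadratic_metric_lie_deriv[where M=M, OF bounded_bilinear_matrix_vector_mult[THEN
        bounded_bilinear.FDERIV, OF B' has_derivative_const] assms(4), of \<delta>]
    by (simp add: inner_add_right)
  also have "\<dots> = 0"
    using assms(1,3,4,5) by (rule quadratic_metric_lie_deriv_killing_combination)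
  finally show ?thesis .
qed

theorem lemma1:
  fixes f :: "real^'n \<Rightarrow> real^'n"
    and B :: "real^'n \<Rightarrow> real^'m^'n"
    and \<phi> :: "real^'n \<Rightarrow> real^'m^'p"
    and M :: "real^'n \<Rightarrow> real^'n^'n"
    and \<theta> :: "real^'p"
    and lam :: real
  assumes "smooth f" and "smooth B" and "smooth \<phi>"
    and "unif_bounded_metric M"
    and "lam > 0"
    and "strong_ccm M f B lam"
  shows "strong_ccm M (\<lambda>x. f x - B x *v (transpose (\<phi> x) *v \<theta>)) B lam"
proof -
  define c where "c x = transpose (\<phi> x) *v \<theta>" for x
  have symmetric: "transpose (M x) = M x" and dM: "M differentiable (at x)" for x
    using assms(4) by (auto simp: unif_bounded_metric_def smooth_imp_differentiable)
  have "bounded_linear (\<lambda>A::real^'m^'p. transpose A *v \<theta>)"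
    by (auto simp: linear_conv_bounded_linear[symmetric] linear_iff vector_matrix_mult_def
        vec_eq_iff sum.distrib sum_distrib_left algebra_simps)
  then have dc: "c differentiable (at x)" for x
    unfolding c_def using smooth_imp_differentiable[OF assms(3)]
    by (auto intro: differentiable_chain_at[unfolded o_def] bounded_linear_imp_differentiable)
  have dB: "B differentiable (at x)" for x
    using assms(2) by (rule smooth_imp_differentiable)
  have dh: "(\<lambda>y. B y *v c y) differentiable (at x)" for x
    using dB dc unfolding differentiable_def
    by (blast intro: bounded_bilinear.FDERIV[OF bounded_bilinear_matrix_vector_mult, simplified])
  have killing: "metric_lie_deriv M (\<lambda>y. column j (B y)) x = 0" for j x
    using assms(6) by (simp add: strong_ccm_iff_metric_lie_deriv)
  have "\<delta> \<bullet> (metric_lie_deriv M (\<lambda>y. f y - B y *v c y) x *v \<delta>)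
      = \<delta> \<bullet> (metric_lie_deriv M f x *v \<delta>)" if "(\<delta> v* M x) v* B x = 0" for x \<delta>
    using quadratic_metric_lie_deriv_diff[OF smooth_imp_differentiable[OF assms(1)] dh dM symmetric]
      quadratic_metric_lie_deriv_matched[OF dB dc dM symmetric killing that]
    by simp
  then show ?thesis
    using assms(6) killing
    by (simp add: strong_ccm_iff_metric_lie_deriv c_def matrix_vector_mult_add_rdistrib
        inner_add_right)
qed

end
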